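(* Let $n=2m$ with $m\ge1$, $K$ a field, and let $K(2,n)\subset K[x_{ij}:1\le i\le j\le n]$ be the monomial ideal generated by all products $x_{ij}x_{hk}$ (with $i\le j$, $h\le k$) not involving any variable $x_{a,n+1-a}$ ($1\le a\le m$) and satisfying at least one of: (1) $a+b=n+1$ for some $a\in\{i,j\}$ and $b\in\{h,k\}$; (2) $i<h$ and $j<k$. Let $\Delta$ be the simplicial complex on vertex set $\{(i,j):1\le i\le j\le n\}$ whose Stanley–Reisner ideal is $K(2,n)$, and $\Delta'=\operatorname{core}(\Delta)$. Then $\Delta'$ is pure and has exactly $2^{n-1}$ facets, each with $m$ vertices.
   Context: A cone point of a simplicial complex is a vertex lying in every facet; $\operatorname{core}(\Delta)$ is the restriction of $\Delta$ to the vertices that are not cone points. *)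

theory Defs
  imports Main "HOL-Library.Multiset"
begin

definition facets :: "'v set set \<Rightarrow> 'v set set" where
  "facets D = {F \<in> D. \<forall>G\<in>D. F \<subseteq> G \<longrightarrow> G = F}"

definition cone_point :: "'v set set \<Rightarrow> 'v \<Rightarrow> bool" where
  "cone_point D v \<longleftrightarrow> {v} \<in> D \<and> (\<forall>F\<in>facets D. v \<in> F)"

definition core :: "'v set set \<Rightarrow> 'v set set" where
  "core D = {F \<in> D. \<forall>v\<in>F. \<not> cone_point D v}"

definition pure :: "'v set set \<Rightarrow> bool" where
  "pure D \<longleftrightarrow> (\<exists>d. \<forall>F\<in>facets D. card F = d)"

definition verts :: "nat \<Rightarrow> (nat \<times> nat) set" where
  "verts n = {(i,j). 1 \<le> i \<and> i \<le> j \<and> j \<le> n}"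

text \<open>Monomials are represented by their exponent multisets over the variables.\<close>
definition K2_gens :: "nat \<Rightarrow> (nat \<times> nat) multiset set" where
  "K2_gens n = {{#(i,j), (h,k)#} | i j h k.
      (i,j) \<in> verts n \<and> (h,k) \<in> verts n \<and>
      (\<forall>a. 1 \<le> a \<and> 2 * a \<le> n \<longrightarrow> (i,j) \<noteq> (a, n+1-a) \<and> (h,k) \<noteq> (a, n+1-a)) \<and>
      ((\<exists>a\<in>{i,j}. \<exists>b\<in>{h,k}. a + b = n + 1) \<or> (i < h \<and> j < k))}"

text \<open>Stanley--Reisner complex of a squarefree monomial ideal generated by the monomials
  in gens on vertex set V: F is a face iff the squarefree monomial x_F is not in the
  ideal, i.e. iff no generator divides x_F.\<close>
definition SR_complex :: "'v set \<Rightarrow> 'v multiset set \<Rightarrow> 'v set set" where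
  "SR_complex V gens = {F. F \<subseteq> V \<and> (\<forall>g\<in>gens. \<not> g \<subseteq># mset_set F)}"

end

theory Submission
  imports Defs
begin

text \<open>The anti-diagonal vertices \<open>(a, n + 1 - a)\<close> occur in no generator, so they are exactly the
  cone points: any other vertex \<open>(i, j)\<close> is excluded from every facet through
  \<open>(n + 1 - i, n + 1 - i)\<close>. Reading \<open>(i, j)\<close> as the interval \<open>[i, j]\<close>, a set of the remaining
  vertices is a face of the core iff its intervals are pairwise nested and no two of their endpoints
  add up to \<open>n + 1\<close>. A facet therefore has as endpoint set a transversal \<open>L\<close> of the pairs
  \<open>{a, n + 1 - a}\<close> (\<open>2 ^ m\<close> choices, \<open>|L| = m\<close>), and consists of a maximal chain of nested intervals
  with endpoints in \<open>L\<close>: the interval \<open>[min L, max L]\<close> followed by such a chain for \<open>L\<close> without its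
  minimum or without its maximum (\<open>2 ^ (m - 1)\<close> choices, \<open>m\<close> intervals).\<close>

section \<open>Nested families of intervals\<close>

definition labels :: "('a \<times> 'a) set \<Rightarrow> 'a set" where
  "labels G = fst ` G \<union> snd ` G"

lemma labels_empty [simp]: "labels {} = {}"
  and labels_insert [simp]: "labels (insert (p, q) G) = insert p (insert q (labels G))"
  by (auto simp: labels_def)

lemma labels_mono: "G \<subseteq> H \<Longrightarrow> labels G \<subseteq> labels H"
  by (auto simp: labels_def)

lemma mem_labelsI: "(i, j) \<in> G \<Longrightarrow> i \<in> labels G \<and> j \<in> labels G"
  by (force simp: labels_def)

lemma mem_labels_iff: "x \<in> labels G \<longleftrightarrow> (\<exists>i j. (i, j) \<in> G \<and> (x = i \<or> x = j))"
  by (force simp: labels_def)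

lemma finite_labels: "finite G \<Longrightarrow> finite (labels G)"
  by (simp add: labels_def)

text \<open>A pair \<open>(i, j)\<close> stands for the interval \<open>[i, j]\<close>; nested families are the chains
  under inclusion.\<close>

definition nested :: "('a::linorder \<times> 'a) set \<Rightarrow> bool" where
  "nested G \<longleftrightarrow> (\<forall>(i, j)\<in>G. i \<le> j) \<and> (\<forall>(i, j)\<in>G. \<forall>(h, k)\<in>G. \<not> (i < h \<and> j < k))"

lemma nested_empty [simp]: "nested {}"
  by (simp add: nested_def)

lemma nested_insertI:
  "nested G \<Longrightarrow> p \<le> q \<Longrightarrow> (\<And>i j. (i, j) \<in> G \<Longrightarrow> \<not> (p < i \<and> q < j) \<and> \<not> (i < p \<and> j < q)) \<Longrightarrow>
    nested (insert (p, q) G)"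
  by (auto simp: nested_def)

lemma nested_subset: "nested H \<Longrightarrow> G \<subseteq> H \<Longrightarrow> nested G"
  unfolding nested_def by blast

lemma nestedD:
  "nested G \<Longrightarrow> (i, j) \<in> G \<Longrightarrow> i \<le> j"
  "nested G \<Longrightarrow> (i, j) \<in> G \<Longrightarrow> (h, k) \<in> G \<Longrightarrow> i < h \<Longrightarrow> j < k \<Longrightarrow> False"
  by (auto simp: nested_def)

lemma nested_insert_hull:
  assumes "nested G" "labels G \<subseteq> L" "finite L" "L \<noteq> {}"
  shows "nested (insert (Min L, Max L) G)"
proof -
  have "Min L \<le> i \<and> j \<le> Max L" if "(i, j) \<in> G" for i j
    using mem_labelsI[OF that] assms(2,3) by auto
  moreover have "Min L \<le> Max L"
    using assms(3,4) by simp
  ultimately show ?thesis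
    by (intro nested_insertI[OF assms(1)]) fastforce+
qed

lemma nested_insert_right_of:
  assumes "nested G" "finite G" "(i0, j0) \<in> G" "a < i0"
  obtains d where "d \<in> labels G" "nested (insert (a, d) G)"
proof -
  define R where "R = {j. \<exists>i. (i, j) \<in> G \<and> a < i}"
  have "finite R"
  proof (rule finite_subset)
    show "R \<subseteq> snd ` G"
      unfolding R_def by force
  qed (use assms(2) in simp)
  moreover have "R \<noteq> {}"
    using assms(3,4) unfolding R_def by blast
  ultimately have "Max R \<in> R"
    by (rule Max_in)
  then obtain i1 where i1: "(i1, Max R) \<in> G" "a < i1"
    unfolding R_def by blast
  have "nested (insert (a, Max R) G)"
  proof (rule nested_insertI[OF assms(1)])
    show "a \<le> Max R"
      using i1 nestedD(1)[OF assms(1)] by fastforce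
    fix i j
    assume ij: "(i, j) \<in> G"
    have "j \<le> Max R" if "a < i"
      using Max_ge[OF \<open>finite R\<close>] ij that unfolding R_def by blast
    moreover have "\<not> j < Max R" if "i < a"
      using nestedD(2)[OF assms(1) ij i1(1)] that i1(2) order.strict_trans by blast
    ultimately show "\<not> (a < i \<and> Max R < j) \<and> \<not> (i < a \<and> j < Max R)"
      by auto
  qed
  then show thesis
    using that mem_labelsI[OF i1(1)] by blast
qed

lemma nested_insert_left_of:
  assumes "nested G" "finite G" "(i0, j0) \<in> G" "j0 < a"
  obtains c where "c \<in> labels G" "nested (insert (c, a) G)"
proof -
  define L where "L = {i. \<exists>j. (i, j) \<in> G \<and> j < a}"
  have "finite L"
  proof (rule finite_subset)
    show "L \<subseteq> fst ` G"
      unfolding L_def by force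
  qed (use assms(2) in simp)
  moreover have "L \<noteq> {}"
    using assms(3,4) unfolding L_def by blast
  ultimately have "Min L \<in> L"
    by (rule Min_in)
  then obtain j1 where j1: "(Min L, j1) \<in> G" "j1 < a"
    unfolding L_def by blast
  have "nested (insert (Min L, a) G)"
  proof (rule nested_insertI[OF assms(1)])
    show "Min L \<le> a"
      using j1 nestedD(1)[OF assms(1)] by fastforce
    fix i j
    assume ij: "(i, j) \<in> G"
    have "\<not> a < j" if "Min L < i"
      using nestedD(2)[OF assms(1) j1(1) ij] that j1(2) order.strict_trans by blast
    moreover have "Min L \<le> i" if "j < a"
      using Min_le[OF \<open>finite L\<close>] ij that unfolding L_def by blast
    ultimately show "\<not> (Min L < i \<and> a < j) \<and> \<not> (i < Min L \<and> j < a)"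
      by auto
  qed
  then show thesis
    using that mem_labelsI[OF j1(1)] by blast
qed

lemma nested_insert_endpoint:
  assumes "nested G" "finite G"
  obtains p q where "a \<in> {p, q}" "{p, q} \<subseteq> insert a (labels G)" "nested (insert (p, q) G)"
proof -
  consider (right) i j where "(i, j) \<in> G" "a < i" | (left) i j where "(i, j) \<in> G" "j < a"
    | (inside) "\<forall>(i, j)\<in>G. i \<le> a \<and> a \<le> j"
    by fastforce
  then show thesis
  proof cases
    case right
    then show thesis
      using nested_insert_right_of[OF assms] that by blast
  next
    case left
    then show thesis
      using nested_insert_left_of[OF assms] that by blast
  next
    case inside
    then have "nested (insert (a, a) G)"
      by (intro nested_insertI[OF assms(1)]) auto
    then show thesis
      using that by blast
  qed
qed

inductive full_chain :: "'a::linorder set \<Rightarrow> ('a \<times> 'a) set \<Rightarrow> bool" where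
  singleton: "full_chain {x} {(x, x)}"
| drop_Min: "finite L \<Longrightarrow> 2 \<le> card L \<Longrightarrow> full_chain (L - {Min L}) H \<Longrightarrow>
    full_chain L (insert (Min L, Max L) H)"
| drop_Max: "finite L \<Longrightarrow> 2 \<le> card L \<Longrightarrow> full_chain (L - {Max L}) H \<Longrightarrow>
    full_chain L (insert (Min L, Max L) H)"

lemma card_ge_2_Min_Max:
  assumes "finite L" "2 \<le> card L"
  shows "Min L \<in> L" "Max L \<in> L" "Min L < Max L"
proof -
  have "L \<noteq> {}"
    using assms(2) by auto
  then show "Min L \<in> L" "Max L \<in> L"
    using assms(1) by simp_all
  have "Min L \<le> x \<and> x \<le> Max L" if "x \<in> L" for x
    using assms(1) that by simp
  moreover have "\<not> L \<subseteq> {Min L}"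
    using assms(2) card_mono[of "{Min L}" L] by fastforce
  ultimately obtain x where "x \<in> L" "Min L < x" "x \<le> Max L"
    by (metis antisym_conv2 singletonI subsetI)
  then show "Min L < Max L"
    by simp
qed

lemma full_chain_labels: "full_chain L H \<Longrightarrow> labels H = L"
proof (induction rule: full_chain.induct)
  case (drop_Min L H)
  then show ?case
    using card_ge_2_Min_Max[OF drop_Min.hyps(1,2)] by auto
next
  case (drop_Max L H)
  then show ?case
    using card_ge_2_Min_Max[OF drop_Max.hyps(1,2)] by auto
qed simp

lemma full_chain_card: "full_chain L H \<Longrightarrow> finite H \<and> card H = card L"
proof (induction rule: full_chain.induct)
  case (drop_Min L H)
  then have "(Min L, Max L) \<notin> H"
    using full_chain_labels mem_labelsI by fastforce
  then show ?case
    using drop_Min card_ge_2_Min_Max[OF drop_Min.hyps(1,2)] by (simp add: card_Suc_Diff1)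
next
  case (drop_Max L H)
  then have "(Min L, Max L) \<notin> H"
    using full_chain_labels mem_labelsI by fastforce
  then show ?case
    using drop_Max card_ge_2_Min_Max[OF drop_Max.hyps(1,2)] by (simp add: card_Suc_Diff1)
qed simp

lemma full_chain_nested: "full_chain L H \<Longrightarrow> nested H"
proof (induction rule: full_chain.induct)
  case (drop_Min L H)
  then show ?case
    by (intro nested_insert_hull) (auto dest: full_chain_labels)
next
  case (drop_Max L H)
  then show ?case
    by (intro nested_insert_hull) (auto dest: full_chain_labels)
qed (intro nested_insertI; simp)

lemma full_chains_singleton: "Collect (full_chain {x}) = {{(x, x)}}"
  by (auto elim: full_chain.cases intro: full_chain.singleton)

lemma full_chains_step:
  assumes "finite L" "2 \<le> card L"
  shows "Collect (full_chain L) = insert (Min L, Max L) `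
           (Collect (full_chain (L - {Min L})) \<union> Collect (full_chain (L - {Max L})))"
proof (intro set_eqI iffI)
  fix H
  assume "H \<in> Collect (full_chain L)"
  then have "full_chain L H"
    by simp
  then show "H \<in> insert (Min L, Max L) `
           (Collect (full_chain (L - {Min L})) \<union> Collect (full_chain (L - {Max L})))"
    using assms(2) by (cases rule: full_chain.cases) auto
next
  fix H
  assume "H \<in> insert (Min L, Max L) `
           (Collect (full_chain (L - {Min L})) \<union> Collect (full_chain (L - {Max L})))"
  then show "H \<in> Collect (full_chain L)"
    using full_chain.drop_Min[OF assms] full_chain.drop_Max[OF assms] by blast
qed

lemma finite_full_chains: "finite L \<Longrightarrow> finite (Collect (full_chain L))"
proof (rule finite_subset)
  show "Collect (full_chain L) \<subseteq> Pow (L \<times> L)"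
    using full_chain_labels mem_labelsI by fastforce
qed simp

lemma card_full_chains_step:
  assumes "finite L" "2 \<le> card L"
  shows "card (Collect (full_chain L)) =
    card (Collect (full_chain (L - {Min L}))) + card (Collect (full_chain (L - {Max L})))"
proof -
  define A B where "A = Collect (full_chain (L - {Min L}))" and "B = Collect (full_chain (L - {Max L}))"
  have "A \<inter> B = {}"
  proof (intro equalityI subsetI)
    fix H
    assume "H \<in> A \<inter> B"
    then have "labels H = L - {Min L}" "labels H = L - {Max L}"
      unfolding A_def B_def using full_chain_labels by auto
    moreover have "Max L \<in> L - {Min L}"
      using card_ge_2_Min_Max[OF assms] by auto
    ultimately show "H \<in> {}"
      by blast
  qed simp
  moreover have "inj_on (insert (Min L, Max L)) (A \<union> B)"
  proof
    have "(Min L, Max L) \<notin> H" if "H \<in> A \<union> B" for H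
    proof -
      have "labels H = L - {Min L} \<or> labels H = L - {Max L}"
        using that full_chain_labels unfolding A_def B_def by blast
      then show ?thesis
        using mem_labelsI[of "Min L" "Max L" H] by blast
    qed
    then show "H1 = H2"
      if "H1 \<in> A \<union> B" "H2 \<in> A \<union> B" "insert (Min L, Max L) H1 = insert (Min L, Max L) H2" for H1 H2
      using that by (simp add: insert_ident)
  qed
  moreover have "finite A" "finite B"
    unfolding A_def B_def using assms(1) by (simp_all add: finite_full_chains)
  ultimately show ?thesis
    unfolding full_chains_step[OF assms] A_def B_def by (simp add: card_image card_Un_disjoint)
qed

lemma card_full_chains:
  "finite L \<Longrightarrow> L \<noteq> {} \<Longrightarrow> card (Collect (full_chain L)) = 2 ^ (card L - 1)"
proof (induction "card L" arbitrary: L rule: less_induct)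
  case less
  show ?case
  proof (cases "card L = 1")
    case True
    then show ?thesis
      by (auto simp: card_1_singleton_iff full_chains_singleton)
  next
    case False
    moreover have "card L \<noteq> 0"
      using less.prems by simp
    ultimately have two: "2 \<le> card L"
      by linarith
    have IH: "card (Collect (full_chain (L - {x}))) = 2 ^ (card L - 2)" if "x \<in> {Min L, Max L}" for x
    proof -
      have "x \<in> L" "L - {x} \<noteq> {}"
        using that card_ge_2_Min_Max[OF less.prems(1) two] by auto
      then show ?thesis
        using less.hyps[of "L - {x}"] less.prems(1) two by simp
    qed
    have "card L - 1 = Suc (card L - 2)"
      using two by simp
    then show ?thesis
      using card_full_chains_step[OF less.prems(1) two] IH by simp
  qed
qed

lemma nested_hull_mem:
  assumes "nested G" "labels G \<subseteq> L" "finite L"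
    and "Min L \<in> labels G" "Max L \<in> labels G"
  shows "(Min L, Max L) \<in> G"
proof -
  have bounds: "Min L \<le> i \<and> i \<le> j \<and> j \<le> Max L" if "(i, j) \<in> G" for i j
    using mem_labelsI[OF that] nestedD(1)[OF assms(1) that] assms(2,3) by auto
  obtain j where j: "(Min L, j) \<in> G"
  proof -
    obtain p q where "(p, q) \<in> G" "Min L = p \<or> Min L = q"
      using assms(4) unfolding labels_def by auto
    with bounds that show thesis
      by (metis order.antisym)
  qed
  obtain i where i: "(i, Max L) \<in> G"
  proof -
    obtain p q where "(p, q) \<in> G" "Max L = p \<or> Max L = q"
      using assms(5) unfolding labels_def by auto
    with bounds that show thesis
      by (metis order.antisym)
  qed
  have "Min L = i \<or> j = Max L"
    using nestedD(2)[OF assms(1) j i] bounds[OF i] bounds[OF j] by fastforce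
  then show ?thesis
    using i j by blast
qed

lemma nested_extends_to_full_chain:
  "nested G \<Longrightarrow> labels G \<subseteq> L \<Longrightarrow> finite L \<Longrightarrow> L \<noteq> {} \<Longrightarrow> \<exists>H. full_chain L H \<and> G \<subseteq> H"
proof (induction "card L" arbitrary: G L rule: less_induct)
  case less
  show ?case
  proof (cases "card L = 1")
    case True
    then obtain x where "L = {x}"
      by (auto simp: card_1_singleton_iff)
    then have "G \<subseteq> {(x, x)}"
      using less.prems(2) mem_labelsI by fastforce
    then show ?thesis
      using \<open>L = {x}\<close> full_chain.singleton by blast
  next
    case False
    moreover have "card L \<noteq> 0"
      using less.prems by simp
    ultimately have two: "2 \<le> card L"
      by linarith
    define G' where "G' = G - {(Min L, Max L)}"
    have G': "nested G'" "labels G' \<subseteq> L"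
      unfolding G'_def using nested_subset[OF less.prems(1)] order_trans[OF labels_mono less.prems(2)]
      by blast+
    obtain x where x: "x = Min L \<or> x = Max L" "x \<notin> labels G'"
      using nested_hull_mem[OF G' less.prems(3)] unfolding G'_def by blast
    have "x \<in> L" "L - {x} \<noteq> {}"
      using x(1) card_ge_2_Min_Max[OF less.prems(3) two] by auto
    moreover have "labels G' \<subseteq> L - {x}"
      using G'(2) x(2) by blast
    ultimately obtain H where H: "full_chain (L - {x}) H" "G' \<subseteq> H"
      using less.hyps[of "L - {x}" G'] G'(1) card_Diff1_less[OF less.prems(3)] less.prems(3)
      by blast
    have "full_chain L (insert (Min L, Max L) H)"
      using x(1) H(1) full_chain.drop_Min[OF less.prems(3) two] full_chain.drop_Max[OF less.prems(3) two]
      by (cases "x = Min L") simp_all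
    moreover have "G \<subseteq> insert (Min L, Max L) H"
      using H(2) unfolding G'_def by blast
    ultimately show ?thesis
      by blast
  qed
qed

lemma card_nested_le_card_labels:
  assumes "nested G" "finite G"
  shows "card G \<le> card (labels G)"
proof (cases "G = {}")
  case False
  then have "labels G \<noteq> {}"
    by (auto simp: labels_def)
  then obtain H where H: "full_chain (labels G) H" "G \<subseteq> H"
    using nested_extends_to_full_chain[OF assms(1) order.refl finite_labels[OF assms(2)]] by blast
  have "finite H \<and> card H = card (labels G)"
    using full_chain_card[OF H(1)] .
  then show ?thesis
    using card_mono[OF _ H(2)] by simp
qed simp

section \<open>Antipodal-free sets of labels\<close>

definition antipodal_free :: "nat \<Rightarrow> nat set \<Rightarrow> bool" where
  "antipodal_free m L \<longleftrightarrow> (\<forall>x\<in>L. 2 * m + 1 - x \<notin> L)"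

definition transversals :: "nat \<Rightarrow> nat set set" where
  "transversals m = {L. L \<subseteq> {1..2 * m} \<and> antipodal_free m L \<and> (\<forall>a\<in>{1..m}. a \<in> L \<or> 2 * m + 1 - a \<in> L)}"

lemma antipodal_free_insert:
  assumes "antipodal_free m L" "L \<subseteq> {1..2 * m}" "a \<le> 2 * m" "2 * m + 1 - a \<notin> L"
  shows "antipodal_free m (insert a L)"
proof -
  have "2 * m + 1 - a \<noteq> a"
    by presburger
  moreover have "2 * m + 1 - x \<noteq> a" if "x \<in> L" for x
  proof -
    have "x \<le> 2 * m"
      using that assms(2) by auto
    then show ?thesis
      using that assms(4) by auto
  qed
  ultimately show ?thesis
    using assms(1,4) unfolding antipodal_free_def by auto
qed

lemma inj_on_fold_antipodal_free:
  assumes "antipodal_free m L" "L \<subseteq> {1..2 * m}"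
  shows "inj_on (\<lambda>x. min x (2 * m + 1 - x)) L"
proof
  fix x y
  assume "x \<in> L" "y \<in> L" "min x (2 * m + 1 - x) = min y (2 * m + 1 - y)"
  moreover have "y \<noteq> 2 * m + 1 - x"
    using assms(1) \<open>x \<in> L\<close> \<open>y \<in> L\<close> unfolding antipodal_free_def by blast
  ultimately show "x = y"
    using assms(2) by (auto simp: min_def split: if_splits)
qed

lemma card_antipodal_free_le:
  assumes "antipodal_free m L" "L \<subseteq> {1..2 * m}"
  shows "card L \<le> m"
proof -
  have "card L = card ((\<lambda>x. min x (2 * m + 1 - x)) ` L)"
    using card_image[OF inj_on_fold_antipodal_free[OF assms]] by simp
  also have "\<dots> \<le> card {1..m}"
    using assms(2) by (intro card_mono) (auto simp: subset_iff)
  finally show ?thesis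
    by simp
qed

lemma card_transversal:
  assumes "L \<in> transversals m"
  shows "card L = m"
proof -
  have L: "antipodal_free m L" "L \<subseteq> {1..2 * m}" "\<forall>a\<in>{1..m}. a \<in> L \<or> 2 * m + 1 - a \<in> L"
    using assms unfolding transversals_def by auto
  have "(\<lambda>x. min x (2 * m + 1 - x)) ` L = {1..m}"
  proof
    show "(\<lambda>x. min x (2 * m + 1 - x)) ` L \<subseteq> {1..m}"
      using L(2) by (auto simp: subset_iff)
    show "{1..m} \<subseteq> (\<lambda>x. min x (2 * m + 1 - x)) ` L"
    proof
      fix a
      assume "a \<in> {1..m}"
      then have fold_a: "a = min a (2 * m + 1 - a)" "a = min (2 * m + 1 - a) (2 * m + 1 - (2 * m + 1 - a))"
        by auto
      from L(3) \<open>a \<in> {1..m}\<close> consider "a \<in> L" | "2 * m + 1 - a \<in> L"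
        by blast
      then show "a \<in> (\<lambda>x. min x (2 * m + 1 - x)) ` L"
        by cases (use fold_a in \<open>blast intro: image_eqI\<close>)+
    qed
  qed
  then show ?thesis
    using card_image[OF inj_on_fold_antipodal_free[OF L(1,2)]] by simp
qed

definition transversal_of :: "nat \<Rightarrow> nat set \<Rightarrow> nat set" where
  "transversal_of m S = S \<union> (\<lambda>x. 2 * m + 1 - x) ` ({1..m} - S)"

lemma transversal_of_lower_half:
  assumes "L \<in> transversals m"
  shows "transversal_of m (L \<inter> {1..m}) = L"
proof -
  have L: "antipodal_free m L" "L \<subseteq> {1..2 * m}" "\<forall>a\<in>{1..m}. a \<in> L \<or> 2 * m + 1 - a \<in> L"
    using assms unfolding transversals_def by auto
  show ?thesis
  proof (intro equalityI subsetI)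
    fix x
    assume "x \<in> transversal_of m (L \<inter> {1..m})"
    then consider "x \<in> L" | y where "y \<in> {1..m}" "y \<notin> L" "x = 2 * m + 1 - y"
      unfolding transversal_of_def by blast
    then show "x \<in> L"
      using L(3) by cases auto
  next
    fix x
    assume "x \<in> L"
    moreover have "2 * m + 1 - x \<notin> L"
      using L(1) \<open>x \<in> L\<close> unfolding antipodal_free_def by blast
    moreover have "1 \<le> x" "x \<le> 2 * m"
      using L(2) \<open>x \<in> L\<close> by auto
    ultimately show "x \<in> transversal_of m (L \<inter> {1..m})"
      unfolding transversal_of_def by (cases "x \<le> m") (auto intro!: image_eqI[of x _ "2 * m + 1 - x"])
  qed
qed

lemma transversal_of_upper_part: "y \<in> (\<lambda>x. 2 * m + 1 - x) ` ({1..m} - S) \<Longrightarrow> m < (y::nat)"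
  by auto

lemma lower_half_transversal_of: "S \<subseteq> {1..m} \<Longrightarrow> transversal_of m S \<inter> {1..m} = S"
  unfolding transversal_of_def using transversal_of_upper_part by fastforce

lemma transversal_of_mem_transversals:
  assumes S: "S \<subseteq> {1..m}"
  shows "transversal_of m S \<in> transversals m"
proof -
  let ?L = "transversal_of m S"
  have S_bounds: "1 \<le> y \<and> y \<le> m" if "y \<in> S" for y
    using that S by auto
  have "2 * m + 1 - x \<notin> ?L" if x: "x \<in> ?L" for x
  proof (cases "x \<in> S")
    case True
    then have "2 * m + 1 - x \<notin> S"
      using S_bounds[OF True] S_bounds[of "2 * m + 1 - x"] by auto
    moreover have "2 * m + 1 - x \<notin> (\<lambda>x. 2 * m + 1 - x) ` ({1..m} - S)"
    proof
      assume "2 * m + 1 - x \<in> (\<lambda>x. 2 * m + 1 - x) ` ({1..m} - S)"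
      then obtain y where "y \<in> {1..m}" "y \<notin> S" "2 * m + 1 - x = 2 * m + 1 - y"
        by blast
      moreover from this have "y = x"
        using S_bounds[OF True] by auto
      ultimately show False
        using True by simp
    qed
    ultimately show ?thesis
      unfolding transversal_of_def by blast
  next
    case False
    then obtain y where "y \<in> {1..m} - S" "x = 2 * m + 1 - y"
      using x unfolding transversal_of_def by blast
    then show ?thesis
      using transversal_of_upper_part[of _ m S] unfolding transversal_of_def by fastforce
  qed
  moreover have "?L \<subseteq> {1..2 * m}"
    using S_bounds unfolding transversal_of_def by fastforce
  moreover have "\<forall>a\<in>{1..m}. a \<in> ?L \<or> 2 * m + 1 - a \<in> ?L"
    unfolding transversal_of_def by auto
  ultimately show ?thesis
    unfolding transversals_def antipodal_free_def by blast
qed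

lemma bij_betw_transversals_lower_half:
  "bij_betw (\<lambda>L. L \<inter> {1..m}) (transversals m) (Pow {1..m})"
proof (rule bij_betw_byWitness[where f' = "transversal_of m"])
  show "\<forall>L\<in>transversals m. transversal_of m (L \<inter> {1..m}) = L"
    using transversal_of_lower_half by blast
  show "\<forall>S\<in>Pow {1..m}. transversal_of m S \<inter> {1..m} = S"
    using lower_half_transversal_of by blast
  show "transversal_of m ` Pow {1..m} \<subseteq> transversals m"
    using transversal_of_mem_transversals by blast
qed auto

lemma card_transversals: "card (transversals m) = 2 ^ m"
  using bij_betw_same_card[OF bij_betw_transversals_lower_half] by (simp add: card_Pow)

lemma facet_superset:
  assumes "finite D" "F \<in> D"
  obtains G where "G \<in> facets D" "F \<subseteq> G"
proof -
  obtain G where "G \<in> D" "F \<subseteq> G" "\<forall>H\<in>D. G \<subseteq> H \<longrightarrow> G = H"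
    using finite_has_maximal2[OF assms] by blast
  then show thesis
    by (intro that[of G]) (auto simp: facets_def)
qed

lemma facets_eqI:
  assumes "Fs \<subseteq> D"
    and "\<And>G. G \<in> D \<Longrightarrow> \<exists>H\<in>Fs. G \<subseteq> H"
    and "\<And>G. G \<in> D \<Longrightarrow> finite G \<and> card G \<le> k"
    and "\<And>H. H \<in> Fs \<Longrightarrow> card H = k"
  shows "facets D = Fs"
proof (intro equalityI subsetI)
  fix G
  assume "G \<in> facets D"
  then have "G \<in> D" "\<forall>H\<in>D. G \<subseteq> H \<longrightarrow> H = G"
    unfolding facets_def by auto
  moreover obtain H where "H \<in> Fs" "G \<subseteq> H"
    using assms(2) \<open>G \<in> D\<close> by blast
  ultimately show "G \<in> Fs"
    using assms(1) by auto
next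
  fix H
  assume H: "H \<in> Fs"
  have "H = G" if "G \<in> D" "H \<subseteq> G" for G
    using card_seteq[OF _ \<open>H \<subseteq> G\<close>] assms(3)[OF \<open>G \<in> D\<close>] assms(4)[OF H] by simp
  then show "H \<in> facets D"
    using H assms(1) unfolding facets_def by auto
qed

section \<open>The complex of \<open>K(2, n)\<close> and its core\<close>

lemma pair_subseteq_mset_set_iff:
  assumes "finite F"
  shows "{#u, v#} \<subseteq># mset_set F \<longleftrightarrow> u \<noteq> v \<and> u \<in> F \<and> v \<in> F"
proof (cases "u = v")
  case True
  then show ?thesis
    using mset_subset_eq_count[of "{#u, v#}" "mset_set F" u] by (auto simp: count_mset_set' split: if_split_asm)
next
  case False
  then have "{#u, v#} = mset_set {u, v}"
    by simp
  then have "{#u, v#} \<subseteq># mset_set F \<longleftrightarrow> {u, v} \<subseteq> F"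
    using msubset_mset_set_iff[OF _ assms, of "{u, v}"] by (simp only:) simp
  then show ?thesis
    using False by simp
qed

lemma finite_verts: "finite (verts n)"
  by (rule finite_subset[of _ "{1..n} \<times> {1..n}"]) (auto simp: verts_def)

abbreviation K2_complex :: "nat \<Rightarrow> (nat \<times> nat) set set" where
  "K2_complex n \<equiv> SR_complex (verts n) (K2_gens n)"

definition antidiagonal :: "nat \<Rightarrow> (nat \<times> nat) set" where
  "antidiagonal n = {(a, n + 1 - a) | a. 1 \<le> a \<and> 2 * a \<le> n}"

fun K2_conflict :: "nat \<Rightarrow> nat \<times> nat \<Rightarrow> nat \<times> nat \<Rightarrow> bool" where
  "K2_conflict n (i, j) (h, k) \<longleftrightarrow> (\<exists>a\<in>{i, j}. \<exists>b\<in>{h, k}. a + b = n + 1) \<or> (i < h \<and> j < k)"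

lemma K2_gens_eq:
  "K2_gens n = {{#u, v#} | u v. u \<in> verts n - antidiagonal n \<and> v \<in> verts n - antidiagonal n \<and>
     K2_conflict n u v}"
    (is "_ = {{#u, v#} | u v. ?gen u v}")
proof -
  have "K2_gens n = {{#(i, j), (h, k)#} | i j h k. ?gen (i, j) (h, k)}"
    unfolding K2_gens_def antidiagonal_def K2_conflict.simps by blast
  also have "\<dots> = {{#u, v#} | u v. ?gen u v}"
  proof (intro equalityI subsetI)
    fix g
    assume "g \<in> {{#u, v#} | u v. ?gen u v}"
    then obtain u v where "g = {#u, v#}" "?gen u v"
      by blast
    then show "g \<in> {{#(i, j), (h, k)#} | i j h k. ?gen (i, j) (h, k)}"
      by (cases u, cases v) blast
  qed blast
  finally show ?thesis .
qed

lemma mem_K2_complex_iff: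
  "F \<in> K2_complex n \<longleftrightarrow> F \<subseteq> verts n \<and>
     (\<forall>u\<in>F - antidiagonal n. \<forall>v\<in>F - antidiagonal n. u \<noteq> v \<longrightarrow> \<not> K2_conflict n u v)"
proof (cases "F \<subseteq> verts n")
  case True
  then have "finite F"
    using finite_subset finite_verts by blast
  have "(\<forall>g\<in>K2_gens n. \<not> g \<subseteq># mset_set F) \<longleftrightarrow>
    (\<forall>u v. u \<in> verts n - antidiagonal n \<longrightarrow> v \<in> verts n - antidiagonal n \<longrightarrow> K2_conflict n u v \<longrightarrow>
       \<not> (u \<noteq> v \<and> u \<in> F \<and> v \<in> F))"
    unfolding K2_gens_eq pair_subseteq_mset_set_iff[OF \<open>finite F\<close>, symmetric] by blast
  with True show ?thesis
    unfolding SR_complex_def by blast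
qed (simp add: SR_complex_def)

lemma mem_antidiagonal_iff:
  "(i, j) \<in> verts (2 * m) \<Longrightarrow> (i, j) \<in> antidiagonal (2 * m) \<longleftrightarrow> i + j = 2 * m + 1"
  unfolding verts_def antidiagonal_def by auto

lemma finite_K2_complex: "finite (K2_complex n)"
  by (rule finite_subset[of _ "Pow (verts n)"]) (auto simp: SR_complex_def finite_verts)

lemma antidiagonal_subset_verts: "antidiagonal n \<subseteq> verts n"
  by (auto simp: antidiagonal_def verts_def)

lemma cone_point_antidiagonal:
  assumes "v \<in> antidiagonal n"
  shows "cone_point (K2_complex n) v"
  unfolding cone_point_def
proof
  have v: "v \<in> verts n"
    using assms antidiagonal_subset_verts by blast
  then show "{v} \<in> K2_complex n"
    by (simp add: mem_K2_complex_iff)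
  show "\<forall>F\<in>facets (K2_complex n). v \<in> F"
  proof
    fix F
    assume F: "F \<in> facets (K2_complex n)"
    then have "insert v F \<in> K2_complex n"
      using v assms by (auto simp: facets_def mem_K2_complex_iff)
    then show "v \<in> F"
      using F unfolding facets_def by blast
  qed
qed

lemma not_cone_point_off_antidiagonal:
  assumes "v \<in> verts (2 * m) - antidiagonal (2 * m)"
  shows "\<not> cone_point (K2_complex (2 * m)) v"
proof
  assume cone: "cone_point (K2_complex (2 * m)) v"
  obtain i j where v: "v = (i, j)"
    by fastforce
  have i: "1 \<le> i" "i \<le> 2 * m"
    using assms unfolding v verts_def by auto
  define w where "w = (2 * m + 1 - i, 2 * m + 1 - i)"
  have w: "w \<in> verts (2 * m) - antidiagonal (2 * m)"
    using i mem_antidiagonal_iff[of "2 * m + 1 - i" "2 * m + 1 - i" m] unfolding w_def verts_def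
    by auto presburger
  have "w \<noteq> v" "K2_conflict (2 * m) v w"
    using i unfolding v w_def by auto presburger
  moreover obtain G where G: "G \<in> facets (K2_complex (2 * m))" "{w} \<subseteq> G"
    using facet_superset[OF finite_K2_complex, of "{w}"] w by (auto simp: mem_K2_complex_iff)
  moreover have "v \<in> G"
    using cone G(1) unfolding cone_point_def by blast
  ultimately show False
    using assms w by (auto simp: facets_def mem_K2_complex_iff)
qed

definition core_face :: "nat \<Rightarrow> (nat \<times> nat) set \<Rightarrow> bool" where
  "core_face m F \<longleftrightarrow> F \<subseteq> verts (2 * m) \<and> antipodal_free m (labels F) \<and> nested F"

lemma labels_subset_verts:
  assumes "G \<subseteq> verts n"
  shows "labels G \<subseteq> {1..n}"
proof
  fix x
  assume "x \<in> labels G"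
  then obtain i j where "(i, j) \<in> G" "x = i \<or> x = j"
    unfolding mem_labels_iff by blast
  then show "x \<in> {1..n}"
    using assms unfolding verts_def by auto
qed

lemma K2_face_if_core_face:
  assumes "core_face m F"
  shows "F \<in> K2_complex (2 * m)" "F \<inter> antidiagonal (2 * m) = {}"
proof -
  have F: "F \<subseteq> verts (2 * m)" "antipodal_free m (labels F)" "nested F"
    using assms unfolding core_face_def by auto
  have labels_bound: "x \<le> 2 * m" if "x \<in> labels F" for x
    using that F(1) unfolding mem_labels_iff verts_def by auto
  have antipodal: "y \<noteq> 2 * m + 1 - x" if "x \<in> labels F" "y \<in> labels F" for x y
    using F(2) that unfolding antipodal_free_def by blast
  show "F \<inter> antidiagonal (2 * m) = {}"
  proof (intro equalityI subsetI)
    fix v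
    assume "v \<in> F \<inter> antidiagonal (2 * m)"
    then obtain i j where "v = (i, j)" "(i, j) \<in> F" "i + j = 2 * m + 1"
      using F(1) mem_antidiagonal_iff by (cases v) blast
    then show "v \<in> {}"
      using antipodal[of i j] mem_labelsI by fastforce
  qed simp
  have no_conflict: "\<not> K2_conflict (2 * m) (i, j) (h, k)" if ij: "(i, j) \<in> F" and hk: "(h, k) \<in> F"
    for i j h k
  proof -
    have "a + b \<noteq> 2 * m + 1" if "a \<in> {i, j}" "b \<in> {h, k}" for a b
    proof -
      have "a \<in> labels F" "b \<in> labels F"
        using that mem_labelsI[OF ij] mem_labelsI[OF hk] by auto
      then show ?thesis
        using antipodal[of a b] labels_bound[of a] by auto
    qed
    moreover have "\<not> (i < h \<and> j < k)"
      using nestedD(2)[OF F(3) ij hk] by blast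
    ultimately show ?thesis
      by simp
  qed
  show "F \<in> K2_complex (2 * m)"
    using F(1) no_conflict unfolding mem_K2_complex_iff by (auto simp del: K2_conflict.simps)
qed

lemma nested_if_no_K2_conflict:
  assumes "F \<subseteq> verts n" "\<And>u v. u \<in> F \<Longrightarrow> v \<in> F \<Longrightarrow> u \<noteq> v \<Longrightarrow> \<not> K2_conflict n u v"
  shows "nested F"
  unfolding nested_def
proof (intro conjI ballI; clarify)
  fix i j
  assume "(i, j) \<in> F"
  then show "i \<le> j"
    using assms(1) by (auto simp: verts_def)
next
  fix i j h k
  assume "(i, j) \<in> F" "(h, k) \<in> F" "i < h" "j < k"
  then show False
    using assms(2)[of "(i, j)" "(h, k)"] by auto
qed

lemma antipodal_free_labels_if_no_K2_conflict:
  assumes "F \<subseteq> verts (2 * m)" "F \<inter> antidiagonal (2 * m) = {}"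
    and "\<And>u v. u \<in> F \<Longrightarrow> v \<in> F \<Longrightarrow> u \<noteq> v \<Longrightarrow> \<not> K2_conflict (2 * m) u v"
  shows "antipodal_free m (labels F)"
  unfolding antipodal_free_def
proof (intro ballI notI)
  fix x
  assume "x \<in> labels F" "2 * m + 1 - x \<in> labels F"
  then obtain i j h k where ij: "(i, j) \<in> F" "x \<in> {i, j}" and hk: "(h, k) \<in> F" "2 * m + 1 - x \<in> {h, k}"
    unfolding mem_labels_iff by blast
  have sum: "x + (2 * m + 1 - x) = 2 * m + 1"
    using ij assms(1) by (auto simp: verts_def)
  show False
  proof (cases "(i, j) = (h, k)")
    case True
    have "x \<noteq> 2 * m + 1 - x"
      by presburger
    then have "i + j = 2 * m + 1"
      using ij(2) hk(2) sum True by auto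
    then show False
      using assms(1,2) ij(1) mem_antidiagonal_iff[of i j m] by blast
  next
    case False
    then show False
      using assms(3)[OF ij(1) hk(1)] ij(2) hk(2) sum by auto
  qed
qed

lemma core_face_if_mem_core:
  assumes "F \<in> core (K2_complex (2 * m))"
  shows "core_face m F"
proof -
  have F: "F \<subseteq> verts (2 * m)"
    and no_conflict: "\<forall>u\<in>F - antidiagonal (2 * m). \<forall>v\<in>F - antidiagonal (2 * m). u \<noteq> v \<longrightarrow>
      \<not> K2_conflict (2 * m) u v"
    using assms unfolding core_def mem_K2_complex_iff by auto
  have off: "F \<inter> antidiagonal (2 * m) = {}"
    using assms cone_point_antidiagonal unfolding core_def by blast
  then have "\<not> K2_conflict (2 * m) u v" if "u \<in> F" "v \<in> F" "u \<noteq> v" for u v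
    using no_conflict that by blast
  then show ?thesis
    using F off nested_if_no_K2_conflict antipodal_free_labels_if_no_K2_conflict unfolding core_face_def
    by metis
qed

lemma core_K2_complex: "core (K2_complex (2 * m)) = Collect (core_face m)"
proof (intro equalityI subsetI)
  fix F
  assume "F \<in> Collect (core_face m)"
  then have "core_face m F"
    by simp
  moreover have "F \<subseteq> verts (2 * m)"
    using \<open>core_face m F\<close> unfolding core_face_def by blast
  ultimately show "F \<in> core (K2_complex (2 * m))"
    using K2_face_if_core_face not_cone_point_off_antidiagonal unfolding core_def by blast
qed (simp add: core_face_if_mem_core)

section \<open>Facets of the core\<close>

lemma core_face_if_full_chain:
  assumes "L \<in> transversals m" "full_chain L H"
  shows "core_face m H"
proof -
  have L: "L \<subseteq> {1..2 * m}" "antipodal_free m L"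
    using assms(1) unfolding transversals_def by auto
  have "H \<subseteq> verts (2 * m)"
  proof
    fix v
    assume "v \<in> H"
    moreover obtain i j where "v = (i, j)"
      by fastforce
    ultimately show "v \<in> verts (2 * m)"
      using mem_labelsI[of i j H] full_chain_labels[OF assms(2)] nestedD(1)[OF full_chain_nested[OF assms(2)]]
        L(1) unfolding verts_def by fastforce
  qed
  then show ?thesis
    using L(2) full_chain_labels[OF assms(2)] full_chain_nested[OF assms(2)] unfolding core_face_def by simp
qed

lemma card_core_face_le:
  assumes "core_face m G"
  shows "finite G \<and> card G \<le> m"
proof -
  have G: "G \<subseteq> verts (2 * m)" "antipodal_free m (labels G)" "nested G"
    using assms unfolding core_face_def by auto
  then have "finite G"
    using finite_subset finite_verts by blast
  moreover have "card G \<le> card (labels G)"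
    using card_nested_le_card_labels G(3) \<open>finite G\<close> by blast
  moreover have "card (labels G) \<le> m"
    using card_antipodal_free_le G(2) labels_subset_verts[OF G(1)] by blast
  ultimately show ?thesis
    by simp
qed

lemma core_face_insert_label:
  assumes "core_face m G" "a \<in> {1..m}" "2 * m + 1 - a \<notin> labels G"
  obtains v where "core_face m (insert v G)" "labels (insert v G) = insert a (labels G)"
proof -
  have G: "G \<subseteq> verts (2 * m)" "antipodal_free m (labels G)" "nested G"
    using assms(1) unfolding core_face_def by auto
  have "finite G"
    using finite_subset[OF G(1) finite_verts] .
  then obtain p q where pq: "a \<in> {p, q}" "{p, q} \<subseteq> insert a (labels G)" "nested (insert (p, q) G)"
    using nested_insert_endpoint[OF G(3), of a] by blast
  have labels: "labels (insert (p, q) G) = insert a (labels G)"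
    using pq(1,2) by auto
  have "insert a (labels G) \<subseteq> {1..2 * m}"
    using assms(2) labels_subset_verts[OF G(1)] by auto
  then have "(p, q) \<in> verts (2 * m)"
    using pq(2) nestedD(1)[OF pq(3)] unfolding verts_def by auto
  moreover have "antipodal_free m (insert a (labels G))"
    using antipodal_free_insert[OF G(2) labels_subset_verts[OF G(1)]] assms(2,3) by simp
  ultimately have "core_face m (insert (p, q) G)"
    using G(1) pq(3) labels unfolding core_face_def by simp
  then show thesis
    using that labels by blast
qed

lemma core_face_extends_to_transversal:
  "core_face m G \<Longrightarrow> \<exists>G'. core_face m G' \<and> G \<subseteq> G' \<and> labels G' \<in> transversals m"
proof (induction "m - card (labels G)" arbitrary: G rule: less_induct)
  case less
  have G: "G \<subseteq> verts (2 * m)" "antipodal_free m (labels G)"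
    using less.prems unfolding core_face_def by auto
  show ?case
  proof (cases "\<forall>a\<in>{1..m}. a \<in> labels G \<or> 2 * m + 1 - a \<in> labels G")
    case True
    then have "labels G \<in> transversals m"
      using G labels_subset_verts[OF G(1)] unfolding transversals_def by blast
    then show ?thesis
      using less.prems by blast
  next
    case False
    then obtain a where a: "a \<in> {1..m}" "a \<notin> labels G" "2 * m + 1 - a \<notin> labels G"
      by blast
    then obtain v where v: "core_face m (insert v G)" "labels (insert v G) = insert a (labels G)"
      using core_face_insert_label[OF less.prems] by blast
    have "finite (labels G)"
      using finite_subset[OF labels_subset_verts[OF G(1)]] by blast
    then have "card (labels (insert v G)) = Suc (card (labels G))"
      using v(2) a(2) by simp
    moreover have "card (labels (insert v G)) \<le> m"
      using card_antipodal_free_le v(1) labels_subset_verts unfolding core_face_def by blast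
    ultimately have "m - card (labels (insert v G)) < m - card (labels G)"
      by simp
    then show ?thesis
      using less.hyps[OF _ v(1)] by blast
  qed
qed

lemma core_face_below_full_chain:
  assumes "core_face m G" "1 \<le> m"
  shows "\<exists>L\<in>transversals m. \<exists>H. full_chain L H \<and> G \<subseteq> H"
proof -
  obtain G' where G': "core_face m G'" "G \<subseteq> G'" "labels G' \<in> transversals m"
    using core_face_extends_to_transversal[OF assms(1)] by blast
  have "finite (labels G')" "labels G' \<noteq> {}"
    using card_transversal[OF G'(3)] assms(2) by (auto intro: card_ge_0_finite)
  moreover have "nested G'"
    using G'(1) unfolding core_face_def by blast
  ultimately obtain H where "full_chain (labels G') H" "G' \<subseteq> H"
    using nested_extends_to_full_chain by blast
  then show ?thesis
    using G'(2,3) by blast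
qed

lemma card_full_chain_transversal: "L \<in> transversals m \<Longrightarrow> full_chain L H \<Longrightarrow> card H = m"
  using full_chain_card card_transversal by metis

lemma facets_core_K2_complex:
  assumes "1 \<le> m"
  shows "facets (core (K2_complex (2 * m))) = (\<Union>L\<in>transversals m. Collect (full_chain L))"
  unfolding core_K2_complex
proof (rule facets_eqI)
  show "(\<Union>L\<in>transversals m. Collect (full_chain L)) \<subseteq> Collect (core_face m)"
    using core_face_if_full_chain by blast
  show "\<exists>H\<in>\<Union>L\<in>transversals m. Collect (full_chain L). G \<subseteq> H" if "G \<in> Collect (core_face m)" for G
    using core_face_below_full_chain[OF _ assms] that by blast
  show "finite G \<and> card G \<le> m" if "G \<in> Collect (core_face m)" for G
    using card_core_face_le that by blast
  show "card H = m" if "H \<in> (\<Union>L\<in>transversals m. Collect (full_chain L))" for H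
    using that card_full_chain_transversal by blast
qed

lemma finite_transversals: "finite (transversals m)"
  by (rule finite_subset[of _ "Pow {1..2 * m}"]) (auto simp: transversals_def)

lemma card_Union_full_chains_transversals:
  assumes "1 \<le> m"
  shows "card (\<Union>L\<in>transversals m. Collect (full_chain L)) = 2 ^ m * 2 ^ (m - 1)"
proof -
  have chains: "card (Collect (full_chain L)) = 2 ^ (m - 1)" if "L \<in> transversals m" for L
  proof -
    have "finite L" "L \<noteq> {}"
      using card_transversal[OF that] assms by (auto intro: card_ge_0_finite)
    then show ?thesis
      using card_full_chains card_transversal[OF that] by metis
  qed
  have "card (\<Union>L\<in>transversals m. Collect (full_chain L)) = (\<Sum>L\<in>transversals m. card (Collect (full_chain L)))"
  proof (rule card_UN_disjoint[OF finite_transversals])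
    show "\<forall>L\<in>transversals m. finite (Collect (full_chain L))"
      using finite_full_chains unfolding transversals_def by (auto intro: finite_subset)
    show "\<forall>L\<in>transversals m. \<forall>L'\<in>transversals m. L \<noteq> L' \<longrightarrow>
        Collect (full_chain L) \<inter> Collect (full_chain L') = {}"
      using full_chain_labels by blast
  qed
  also have "\<dots> = 2 ^ m * 2 ^ (m - 1)"
    using chains card_transversals by simp
  finally show ?thesis .
qed

theorem lemma5p1:
  fixes m n :: nat
  assumes "m \<ge> 1" and "n = 2 * m"
  shows "pure (core (SR_complex (verts n) (K2_gens n))) \<and>
         card (facets (core (SR_complex (verts n) (K2_gens n)))) = 2 ^ (n - 1) \<and>
         (\<forall>F \<in> facets (core (SR_complex (verts n) (K2_gens n))). card F = m)"
proof -
  have facets: "facets (core (K2_complex n)) = (\<Union>L\<in>transversals m. Collect (full_chain L))"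
    using facets_core_K2_complex[OF assms(1)] assms(2) by simp
  then have sizes: "\<forall>F\<in>facets (core (K2_complex n)). card F = m"
    using card_full_chain_transversal by blast
  have "card (facets (core (K2_complex n))) = 2 ^ m * 2 ^ (m - 1)"
    unfolding facets using card_Union_full_chains_transversals[OF assms(1)] .
  also have "\<dots> = 2 ^ (n - 1)"
    using assms by (simp flip: power_add)
  finally show ?thesis
    using sizes unfolding pure_def by blast
qed

end
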